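(* Under the standing setup, let $u\in\widetilde X\setminus\overline X$, let $z^*$ be as in the hypothesis below, set $r_u=\min\{1,\frac{\varepsilon\|u-u_{NN}\|}{480}\}$, and for $v\in B(u,r_u)\cap\widetilde X$ set $\delta_v=\frac{240\|u-v\|}{\varepsilon\|u-u_{NN}\|}$ and $z_v=(1-\delta_v)\beta(u)+\delta_vz^*$. Then $\tilde g_i(z_v,v)\le0$ for all $i=1,\ldots,2\ell$, i.e., $z_v\in\widetilde F_v$ (in particular $\|\beta(v)\|\le\|z_v\|$).
   Context: Norms are Euclidean; $B(x,r)$ is the open ball. Standing setup: $X\subseteq\mathbb{R}^d$ has reach $\tau_X>0$, where $\tau_X=\sup\{t\ge0:\text{every }x\text{ with }d(x,X)<t\text{ has a unique closest point in }\overline X\}$; $\widetilde X=X+B(0,\tau_X/2)$; for $u\in\widetilde X$, $u_{NN}$ is the unique closest point to $u$ in $\overline X$, and it is a known fact that $\|u_{NN}-v_{NN}\|\le2\|u-v\|$ for all $u,v\in\widetilde X$. $\varepsilon\in(0,1)$. $S_X=\overline{\{(x-y)/\|x-y\|:x\ne y\in X\}}$. A linear $\Pi$ provides $\eta$-convex hull distortion for $T\subseteq S^{d-1}$ if $|\,\|\Pi x\|-\|x\|\,|<\eta$ for all $x\in\operatorname{conv}(T)$. $\mathcal C=\{w_1,\ldots,w_\ell\}\subseteq S_X$ is finite with every $v\in S_X$ within distance $<\varepsilon/40$ of some $w_i$; $\Pi\in\mathbb{R}^{m\times d}$ provides $\frac{\varepsilon}{240}$-convex hull distortion for $S_X$.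 For $z\in\mathbb{R}^m$, $u\in\widetilde X$, $i=1,\ldots,\ell$: $\tilde g_i(z,u)=\langle z,\Pi w_i\rangle-\langle u-u_{NN},w_i\rangle-\frac{\varepsilon}{30}\|u-u_{NN}\|$, $\tilde g_{\ell+i}(z,u)=\langle u-u_{NN},w_i\rangle-\langle z,\Pi w_i\rangle-\frac{\varepsilon}{30}\|u-u_{NN}\|$; $\widetilde F_u=\{z:\tilde g_i(z,u)\le0\ \forall i\}$; $\beta(u)=\arg\min_{z\in\widetilde F_u}\|z\|$. Hypothesis on $z^*$: $z^*\in\mathbb{R}^m$ is any point with $\|z^*\|\le\|u-u_{NN}\|$ and $\tilde g_i(z^*,u)\le-\frac{\varepsilon}{60}\|u-u_{NN}\|$ for all $i=1,\ldots,2\ell$ (such a point exists). *)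

theory Defs
  imports "HOL-Analysis.Analysis" "HOL-Library.Extended_Real"
begin

definition reach :: "'a::euclidean_space set \<Rightarrow> ereal" where
  "reach X = Sup {ereal t | t. t \<ge> 0 \<and>
      (\<forall>x. infdist x X < t \<longrightarrow> (\<exists>!y. y \<in> closure X \<and> dist x y = infdist x X))}"

definition Xtilde :: "'a::euclidean_space set \<Rightarrow> 'a set" where
  "Xtilde X = {y + b | y b. y \<in> X \<and> ereal (norm b) < reach X / 2}"

definition nn :: "'a::euclidean_space set \<Rightarrow> 'a \<Rightarrow> 'a" where
  "nn X u = (THE y. y \<in> closure X \<and> dist u y = infdist u X)"

definition secants :: "'a::euclidean_space set \<Rightarrow> 'a set" where
  "secants X = closure {(1 / norm (x - y)) *\<^sub>R (x - y) | x y. x \<in> X \<and> y \<in> X \<and> x \<noteq> y}"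

definition hull_distortion :: "('a::euclidean_space \<Rightarrow> 'b::euclidean_space) \<Rightarrow> real \<Rightarrow> 'a set \<Rightarrow> bool" where
  "hull_distortion P eta T \<longleftrightarrow> (\<forall>x \<in> convex hull T. \<bar>norm (P x) - norm x\<bar> < eta)"

definition gt :: "'a::euclidean_space set \<Rightarrow> ('a \<Rightarrow> 'b::euclidean_space) \<Rightarrow> (nat \<Rightarrow> 'a) \<Rightarrow> nat
    \<Rightarrow> real \<Rightarrow> nat \<Rightarrow> 'b \<Rightarrow> 'a \<Rightarrow> real" where
  "gt X P w l eps i z u =
     (if i \<le> l then inner z (P (w i)) - inner (u - nn X u) (w i) - eps / 30 * norm (u - nn X u)
      else inner (u - nn X u) (w (i - l)) - inner z (P (w (i - l))) - eps / 30 * norm (u - nn X u))"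

definition Ft :: "'a::euclidean_space set \<Rightarrow> ('a \<Rightarrow> 'b::euclidean_space) \<Rightarrow> (nat \<Rightarrow> 'a) \<Rightarrow> nat
    \<Rightarrow> real \<Rightarrow> 'a \<Rightarrow> 'b set" where
  "Ft X P w l eps u = {z. \<forall>i \<in> {1..2*l}. gt X P w l eps i z u \<le> 0}"

definition beta :: "'a::euclidean_space set \<Rightarrow> ('a \<Rightarrow> 'b::euclidean_space) \<Rightarrow> (nat \<Rightarrow> 'a) \<Rightarrow> nat
    \<Rightarrow> real \<Rightarrow> 'a \<Rightarrow> 'b" where
  "beta X P w l eps u = arg_min norm (\<lambda>z. z \<in> Ft X P w l eps u)"

end

theory Submission
  imports Defs
begin

text \<open>The only non-elementary ingredient is that the nearest-point map is 2-Lipschitz on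
  \<open>Xtilde X\<close>. It follows from the normal inequality
  \<open>2 t \<langle>a - p, x - p\<rangle> \<le> d(x) \<parallel>a - p\<parallel>\<^sup>2\<close> (\<open>p\<close> the projection of \<open>x\<close>, \<open>a \<in> closure X\<close>, \<open>t\<close> below the reach),
  which says that the ball of radius \<open>t\<close> centred on the normal ray through \<open>x\<close> misses \<open>X\<close>;
  that the distance keeps growing linearly along the normal ray is shown with Brouwer's fixed
  point theorem. Given the Lipschitz bound, each constraint \<open>g_i(z, \<cdot>)\<close> moves by at most
  \<open>4 \<parallel>u - v\<parallel>\<close> between \<open>u\<close> and \<open>v\<close>, and \<open>z_v\<close> mixes in just enough of the strictly feasible
  \<open>z\<^sup>*\<close> to absorb this.\<close>

definition unique_projection :: "'a::metric_space set \<Rightarrow> real \<Rightarrow> bool" where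
  "unique_projection X \<tau> \<longleftrightarrow>
     (\<forall>x. infdist x X < \<tau> \<longrightarrow> (\<exists>!y. y \<in> closure X \<and> dist x y = infdist x X))"

lemma infdist_le_dist_closure:
  assumes "X \<noteq> {}" "a \<in> closure X"
  shows "infdist x X \<le> dist x a"
proof -
  have "infdist a X = 0" using assms in_closure_iff_infdist_zero by blast
  then show ?thesis using infdist_triangle[of x X a] by simp
qed

lemma nn_projection:
  assumes "unique_projection X \<tau>" "infdist x X < \<tau>"
  shows "nn X x \<in> closure X" "dist x (nn X x) = infdist x X"
proof -
  have "\<exists>!y. y \<in> closure X \<and> dist x y = infdist x X"
    using assms unfolding unique_projection_def by blast
  then have "nn X x \<in> closure X \<and> dist x (nn X x) = infdist x X"
    unfolding nn_def by (rule theI')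
  then show "nn X x \<in> closure X" "dist x (nn X x) = infdist x X" by auto
qed

lemma nn_unique:
  assumes "unique_projection X \<tau>" "infdist x X < \<tau>" "y \<in> closure X" "dist x y = infdist x X"
  shows "nn X x = y"
proof -
  have "\<exists>!y. y \<in> closure X \<and> dist x y = infdist x X"
    using assms unfolding unique_projection_def by blast
  then show ?thesis unfolding nn_def by (rule the1_equality) (use assms in auto)
qed

lemma norm_diff_nn:
  assumes "unique_projection X \<tau>" "infdist x X < \<tau>"
  shows "norm (x - nn X x) = infdist x X"
  using nn_projection[OF assms] by (simp add: dist_norm)

text \<open>The graph of \<open>nn X\<close> over \<open>S\<close> is closed and \<open>nn X\<close> maps \<open>S\<close> into a compact set.\<close>

lemma continuous_on_nn:
  fixes X :: "'a::euclidean_space set"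
  assumes X: "unique_projection X \<tau>" and S: "S \<subseteq> {x. infdist x X < \<tau>}" and "bounded S"
  shows "continuous_on S (nn X)"
proof -
  obtain B where B: "\<And>x. x \<in> S \<Longrightarrow> norm x \<le> B" using \<open>bounded S\<close> bounded_iff by blast
  define T where "T = cball (0::'a) (B + \<tau>)"
  have fim: "nn X \<in> S \<rightarrow> T"
  proof
    fix x assume x: "x \<in> S"
    have "norm (x - nn X x) < \<tau>" using norm_diff_nn[OF X] S x by auto
    then have "norm (nn X x) \<le> norm x + \<tau>" using norm_triangle_sub[of "nn X x" x]
      by (simp add: norm_minus_commute)
    then show "nn X x \<in> T" using B[OF x] unfolding T_def by simp
  qed
  define C where "C = {z :: 'a \<times> 'a. snd z \<in> closure X \<and> dist (fst z) (snd z) = infdist (fst z) X}"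
  have "closed C"
  proof -
    have "C = (UNIV \<times> closure X) \<inter> {z. dist (fst z) (snd z) = infdist (fst z) X}"
      unfolding C_def by auto
    then show ?thesis
      by (simp only:) (intro closed_Int closed_Times closed_Collect_eq continuous_intros; simp)
  qed
  have "(\<lambda>x. (x, nn X x)) ` S = S \<times> T \<inter> C"
  proof
    show "(\<lambda>x. (x, nn X x)) ` S \<subseteq> S \<times> T \<inter> C"
      using fim nn_projection[OF X] S unfolding C_def by auto
    show "S \<times> T \<inter> C \<subseteq> (\<lambda>x. (x, nn X x)) ` S"
    proof
      fix z assume z: "z \<in> S \<times> T \<inter> C"
      then have "nn X (fst z) = snd z"
        using S by (intro nn_unique[OF X]) (auto simp: C_def)
      then show "z \<in> (\<lambda>x. (x, nn X x)) ` S" using z by (auto intro: image_eqI[of _ _ "fst z"])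
    qed
  qed
  then have "closedin (top_of_set (S \<times> T)) ((\<lambda>x. (x, nn X x)) ` S)"
    using \<open>closed C\<close> by (simp add: closedin_closed_Int)
  moreover have "compact T" unfolding T_def by simp
  ultimately show ?thesis using continuous_closed_graph_eq[OF _ fim] by blast
qed

text \<open>Brouwer applied to \<open>z \<mapsto> y + h \<cdot> (z - nn X z) / \<parallel>z - nn X z\<parallel>\<close>, which maps the ball onto its
  boundary sphere.\<close>

lemma fixed_point_along_projection_direction:
  fixes X :: "'a::euclidean_space set"
  assumes X: "unique_projection X \<tau>" and "0 < h"
    and ball: "\<And>z. z \<in> cball y h \<Longrightarrow> h < infdist z X \<and> infdist z X < \<tau>"
  obtains z where "z \<in> cball y h" "z - y = (h / infdist z X) *\<^sub>R (z - nn X z)"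
proof -
  define f where "f z = y + (h / norm (z - nn X z)) *\<^sub>R (z - nn X z)" for z
  have nz: "norm (z - nn X z) = infdist z X" if "z \<in> cball y h" for z
    using norm_diff_nn[OF X] ball[OF that] by blast
  have "continuous_on (cball y h) (nn X)"
    by (rule continuous_on_nn[OF X]) (use ball in auto)
  moreover have "\<forall>z \<in> cball y h. norm (z - nn X z) \<noteq> 0"
    using nz ball \<open>0 < h\<close> by force
  ultimately have "continuous_on (cball y h) f"
    unfolding f_def by (intro continuous_intros) auto
  moreover have "f \<in> cball y h \<rightarrow> cball y h"
  proof
    fix z assume "z \<in> cball y h"
    then have "0 < norm (z - nn X z)" using nz ball \<open>0 < h\<close> by force
    then show "f z \<in> cball y h" using \<open>0 < h\<close> by (simp add: f_def dist_norm)
  qed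
  ultimately obtain z where "z \<in> cball y h" "f z = z"
    using brouwer[of "cball y h" f] \<open>0 < h\<close> by auto
  then show ?thesis using that nz unfolding f_def by (metis add_diff_cancel_left')
qed

text \<open>The fixed point \<open>z\<close> sees \<open>y\<close> on the segment towards its projection \<open>q\<close>, so \<open>q\<close> is also a
  nearest point of \<open>y\<close>; uniqueness forces \<open>q = p\<close>, putting \<open>z\<close> on the ray at height \<open>T + h\<close>.\<close>

lemma extend_normal_ray:
  fixes X :: "'a::euclidean_space set"
  assumes X: "unique_projection X \<tau>" and "X \<noteq> {}" and p: "p \<in> closure X" and "norm n = 1"
    and T: "0 < T" "infdist (p + T *\<^sub>R n) X = T" and h: "0 < h" "h \<le> T / 3" "T + h < \<tau>"
  shows "infdist (p + (T + h) *\<^sub>R n) X = T + h"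
proof -
  define y where "y = p + T *\<^sub>R n"
  have "dist y p = T" using \<open>norm n = 1\<close> T by (simp add: y_def dist_norm)
  have iy: "infdist y X = T" using T unfolding y_def by simp
  have ball: "h < infdist z X \<and> infdist z X < \<tau>" if "z \<in> cball y h" for z
    using that iy h infdist_triangle[of z X y] infdist_triangle[of y X z] by (auto simp: dist_commute)
  obtain z where z: "z \<in> cball y h" and zy: "z - y = (h / infdist z X) *\<^sub>R (z - nn X z)"
    using fixed_point_along_projection_direction[OF X h(1) ball] .
  define q where "q = nn X z"
  define D where "D = infdist z X"
  have "h < D" "D < \<tau>" using ball[OF z] by (auto simp: D_def)
  have q: "q \<in> closure X" "norm (z - q) = D"
    using nn_projection[OF X \<open>D < \<tau>\<close>[unfolded D_def]] by (auto simp: q_def D_def dist_norm)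
  have yq: "y - q = (1 - h / D) *\<^sub>R (z - q)"
    using zy unfolding q_def D_def by (simp add: algebra_simps)
  have "0 < 1 - h / D" using \<open>h < D\<close> h by simp
  then have "norm (y - q) = (1 - h / D) * D" using yq q(2) by simp
  also have "\<dots> = D - h" using \<open>h < D\<close> h by (simp add: field_simps)
  finally have "norm (y - q) = D - h" .
  moreover have "norm (z - y) = h / D * norm (z - q)"
    using zy \<open>h < D\<close> h unfolding q_def D_def by simp
  then have "norm (z - y) = h" using q(2) \<open>h < D\<close> h by simp
  then have "D - h \<le> infdist y X"
    using infdist_triangle[of z X y] by (simp add: D_def dist_norm)
  ultimately have dyq: "dist y q = infdist y X"
    using infdist_le_dist_closure[OF \<open>X \<noteq> {}\<close> q(1), of y] by (simp add: dist_norm)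
  have yU: "infdist y X < \<tau>" using iy h by linarith
  have "q = p"
    using nn_unique[OF X yU q(1) dyq] nn_unique[OF X yU p] \<open>dist y p = T\<close> iy by simp
  have DT: "D = T + h" using \<open>norm (y - q) = D - h\<close> \<open>dist y q = infdist y X\<close> iy
    by (simp add: dist_norm)
  have "(1 - h / D) *\<^sub>R (z - p) = T *\<^sub>R n" using yq \<open>q = p\<close> by (simp add: y_def)
  then have "(D / T) *\<^sub>R ((1 - h / D) *\<^sub>R (z - p)) = D *\<^sub>R n" using T(1) by simp
  moreover have "(D / T) * (1 - h / D) = (D - h) / T" using \<open>h < D\<close> h by (simp add: field_simps)
  then have "(D / T) * (1 - h / D) = 1" using DT \<open>0 < T\<close> by simp
  ultimately have "z = p + (T + h) *\<^sub>R n" using DT by (simp add: algebra_simps)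
  then show ?thesis using DT D_def by simp
qed

lemma infdist_along_normal_ray:
  fixes X :: "'a::euclidean_space set"
  assumes X: "unique_projection X \<tau>" and "X \<noteq> {}" and p: "p \<in> closure X" and "norm n = 1"
    and s: "0 < s" "s \<le> t" "t < \<tau>" "infdist (p + s *\<^sub>R n) X = s"
  shows "infdist (p + t *\<^sub>R n) X = t"
proof -
  define K where "K = {s..t} \<inter> {r. infdist (p + r *\<^sub>R n) X = r}"
  have "closed K" unfolding K_def
    by (intro closed_Int closed_real_atLeastAtMost closed_Collect_eq continuous_intros)
  moreover have "s \<in> K" "bdd_above K" using s unfolding K_def by auto
  ultimately have TK: "Sup K \<in> K" and Tup: "\<And>r. r \<in> K \<Longrightarrow> r \<le> Sup K"
    using closed_contains_Sup cSup_upper by blast+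
  define T where "T = Sup K"
  have T: "s \<le> T" "T \<le> t" "infdist (p + T *\<^sub>R n) X = T" using TK unfolding K_def T_def by auto
  show ?thesis
  proof (rule ccontr)
    assume "infdist (p + t *\<^sub>R n) X \<noteq> t"
    then have "T < t" using T by (metis order_le_less)
    define h where "h = min (T / 3) (t - T)"
    have h: "0 < h" "h \<le> T / 3" "T + h \<le> t" using \<open>T < t\<close> s T unfolding h_def by (auto simp: min_def)
    have "infdist (p + (T + h) *\<^sub>R n) X = T + h"
      using extend_normal_ray[OF X \<open>X \<noteq> {}\<close> p \<open>norm n = 1\<close> _ T(3) h(1,2)] s T h by auto
    then have "T + h \<in> K" using T h unfolding K_def by auto
    then show False using Tup h unfolding T_def by fastforce
  qed
qed

text \<open>The point \<open>p + t n\<close> on the normal ray has distance \<open>t\<close> to \<open>a\<close> or more; expanding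
  \<open>\<parallel>p - a + t n\<parallel>\<^sup>2 \<ge> t\<^sup>2\<close> gives the inequality.\<close>

lemma nn_normal_inequality:
  fixes X :: "'a::euclidean_space set"
  assumes X: "unique_projection X \<tau>" and "X \<noteq> {}"
    and t: "infdist x X \<le> t" "0 < t" "t < \<tau>" and a: "a \<in> closure X"
  shows "2 * t * ((a - nn X x) \<bullet> (x - nn X x)) \<le> infdist x X * (norm (a - nn X x))\<^sup>2"
proof -
  define p where "p = nn X x"
  define d where "d = infdist x X"
  have p: "p \<in> closure X" "norm (x - p) = d"
    using nn_projection[OF X] t unfolding p_def d_def by (auto simp: dist_norm)
  show ?thesis
  proof (cases "d = 0")
    case True
    then show ?thesis using p unfolding p_def[symmetric] d_def[symmetric] by simp
  next
    case False
    then have "0 < d" using infdist_nonneg[of x X] unfolding d_def by linarith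
    define n where "n = (1 / d) *\<^sub>R (x - p)"
    have n1: "norm n = 1" and pdn: "p + d *\<^sub>R n = x"
      using p \<open>0 < d\<close> unfolding n_def by auto
    have "infdist (p + t *\<^sub>R n) X = t"
      using infdist_along_normal_ray[OF X \<open>X \<noteq> {}\<close> p(1) n1 \<open>0 < d\<close>] t pdn d_def by simp
    then have "t \<le> norm ((p - a) + t *\<^sub>R n)"
      using infdist_le_dist_closure[OF \<open>X \<noteq> {}\<close> a, of "p + t *\<^sub>R n"] by (simp add: dist_norm diff_add_eq)
    then have "t\<^sup>2 \<le> (norm ((p - a) + t *\<^sub>R n))\<^sup>2"
      using t(2) by (simp add: power_mono)
    also have "\<dots> = (norm (a - p))\<^sup>2 - 2 * t * ((a - p) \<bullet> n) + t\<^sup>2 * (n \<bullet> n)"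
      by (simp only: power2_norm_eq_inner)
        (simp add: inner_add_left inner_add_right inner_diff_left inner_diff_right inner_commute
          power2_eq_square algebra_simps)
    also have "n \<bullet> n = 1" using n1 by (simp add: norm_eq_1)
    finally have "2 * t * ((a - p) \<bullet> n) \<le> (norm (a - p))\<^sup>2" by simp
    then have "d * (2 * t * ((a - p) \<bullet> n)) \<le> d * (norm (a - p))\<^sup>2"
      using \<open>0 < d\<close> by simp
    moreover have "(a - p) \<bullet> (x - p) = d * ((a - p) \<bullet> n)"
      unfolding n_def using \<open>0 < d\<close> by simp
    ultimately show ?thesis unfolding p_def[symmetric] d_def[symmetric] by (simp add: ac_simps)
  qed
qed

text \<open>Adding the normal inequalities at \<open>x\<close> (with \<open>a = nn X y\<close>) and at \<open>y\<close> (with \<open>a = nn X x\<close>),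
  for \<open>t = 2 m\<close>, gives \<open>2 \<langle>q - p, x - y\<rangle> + \<parallel>q - p\<parallel>\<^sup>2 \<le> 0\<close>.\<close>

lemma nn_lipschitz:
  fixes X :: "'a::euclidean_space set"
  assumes X: "unique_projection X \<tau>" and "X \<noteq> {}"
    and m: "infdist x X \<le> m" "infdist y X \<le> m" "2 * m < \<tau>"
  shows "norm (nn X x - nn X y) \<le> 2 * norm (x - y)"
proof -
  define p where "p = nn X x"
  define q where "q = nn X y"
  have "0 \<le> m" using m infdist_nonneg[of x X] by simp
  have xp: "norm (x - p) = infdist x X" and yq: "norm (y - q) = infdist y X"
    using norm_diff_nn[OF X] m \<open>0 \<le> m\<close> unfolding p_def q_def by auto
  show ?thesis
  proof (cases "m = 0")
    case True
    then have "x = p" "y = q" using xp yq m infdist_nonneg[of x X] infdist_nonneg[of y X] by auto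
    then show ?thesis unfolding p_def[symmetric] q_def[symmetric] by simp
  next
    case False
    then have t: "0 < 2 * m" using \<open>0 \<le> m\<close> by simp
    have pq: "p \<in> closure X" "q \<in> closure X"
      using nn_projection(1)[OF X] m \<open>0 \<le> m\<close> unfolding p_def q_def by auto
    define S where "S = (norm (q - p))\<^sup>2"
    have "(q - p) \<bullet> (x - p) + (p - q) \<bullet> (y - q) = (q - p) \<bullet> (x - y) + S"
      unfolding S_def
      by (simp add: power2_norm_eq_inner inner_diff_left inner_diff_right inner_commute algebra_simps)
    then have "2 * (2 * m) * ((q - p) \<bullet> (x - y) + S)
        = 2 * (2 * m) * ((q - p) \<bullet> (x - p)) + 2 * (2 * m) * ((p - q) \<bullet> (y - q))"
      by (simp only: distrib_left[symmetric])
    also have "\<dots> \<le> infdist x X * S + infdist y X * S"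
    proof (rule add_mono)
      show "2 * (2 * m) * ((q - p) \<bullet> (x - p)) \<le> infdist x X * S"
        using nn_normal_inequality[OF X \<open>X \<noteq> {}\<close> _ t _ pq(2), of x] m \<open>0 \<le> m\<close>
        unfolding p_def S_def by simp
      show "2 * (2 * m) * ((p - q) \<bullet> (y - q)) \<le> infdist y X * S"
        using nn_normal_inequality[OF X \<open>X \<noteq> {}\<close> _ t _ pq(1), of y] m \<open>0 \<le> m\<close>
        unfolding q_def S_def by (simp add: norm_minus_commute)
    qed
    also have "\<dots> \<le> 2 * m * S"
      using m unfolding S_def by (simp add: mult_right_mono flip: distrib_right)
    finally have "2 * m * (2 * ((q - p) \<bullet> (x - y)) + S) \<le> 0"
      by (simp add: algebra_simps)
    then have "(norm (q - p))\<^sup>2 \<le> 2 * (- ((q - p) \<bullet> (x - y)))"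
      using t unfolding S_def by (simp add: mult_le_0_iff)
    also have "\<dots> \<le> 2 * (norm (q - p) * norm (x - y))"
      using Cauchy_Schwarz_ineq2[of "q - p" "x - y"] by simp
    finally have "norm (q - p) * norm (q - p) \<le> norm (q - p) * (2 * norm (x - y))"
      by (simp add: power2_eq_square algebra_simps)
    then have "norm (q - p) \<le> 2 * norm (x - y)"
      by (cases "norm (q - p) = 0") (auto simp: mult_le_cancel_left_pos)
    then show ?thesis unfolding p_def q_def by (simp add: norm_minus_commute)
  qed
qed

lemma unique_projection_below_reach:
  assumes "ereal c < reach X"
  obtains \<tau> where "c < \<tau>" "unique_projection X \<tau>"
proof -
  obtain t where "ereal c < ereal t"
      "\<forall>x. infdist x X < t \<longrightarrow> (\<exists>!y. y \<in> closure X \<and> dist x y = infdist x X)"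
    using assms unfolding reach_def less_Sup_iff by blast
  then show ?thesis using that unfolding unique_projection_def by auto
qed

lemma Xtilde_infdist:
  assumes "x \<in> Xtilde X"
  shows "ereal (2 * infdist x X) < reach X" "X \<noteq> {}"
proof -
  obtain y b where yb: "x = y + b" "y \<in> X" "ereal (norm b) < reach X / 2"
    using assms unfolding Xtilde_def by blast
  have "infdist x X \<le> norm b" using infdist_le[OF yb(2), of x] yb(1) by (simp add: dist_norm)
  then have "ereal (infdist x X) < reach X / 2" using yb(3) by (meson ereal_less_eq(3) order_le_less_trans)
  then show "ereal (2 * infdist x X) < reach X" by (cases "reach X") auto
  show "X \<noteq> {}" using yb(2) by blast
qed

lemma nn_projection_Xtilde:
  assumes "x \<in> Xtilde X"
  shows "nn X x \<in> closure X"
proof -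
  have "ereal (2 * infdist x X) < reach X" using Xtilde_infdist[OF assms] by blast
  then obtain \<tau> where "2 * infdist x X < \<tau>" "unique_projection X \<tau>"
    by (rule unique_projection_below_reach)
  then show ?thesis using nn_projection(1) infdist_nonneg[of x X] by fastforce
qed

lemma nn_lipschitz_Xtilde:
  fixes X :: "'a::euclidean_space set"
  assumes "x \<in> Xtilde X" "y \<in> Xtilde X"
  shows "norm (nn X x - nn X y) \<le> 2 * norm (x - y)"
proof -
  define m where "m = max (infdist x X) (infdist y X)"
  have "ereal (2 * m) < reach X"
    using Xtilde_infdist(1)[OF assms(1)] Xtilde_infdist(1)[OF assms(2)] by (simp add: m_def max_def)
  then obtain \<tau> where "2 * m < \<tau>" "unique_projection X \<tau>"
    by (rule unique_projection_below_reach)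
  then show ?thesis
    using nn_lipschitz Xtilde_infdist(2)[OF assms(1)] unfolding m_def by (metis max.cobounded1 max.cobounded2)
qed

lemma residual_lipschitz_Xtilde:
  fixes X :: "'a::euclidean_space set"
  assumes "u \<in> Xtilde X" "v \<in> Xtilde X"
  shows "norm ((v - nn X v) - (u - nn X u)) \<le> 3 * norm (u - v)"
proof -
  have "norm ((v - nn X v) - (u - nn X u)) \<le> norm (v - u) + norm (nn X v - nn X u)"
    using norm_triangle_ineq4[of "v - u" "nn X v - nn X u"] by (simp add: algebra_simps)
  then show ?thesis using nn_lipschitz_Xtilde[OF assms(2,1)] by (simp add: norm_minus_commute)
qed

lemma norm_secants:
  assumes "x \<in> secants X"
  shows "norm x = 1"
proof -
  have "secants X \<subseteq> sphere 0 1" unfolding secants_def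
    by (rule closure_minimal) auto
  then show ?thesis using assms by auto
qed

lemma closed_Ft: "closed (Ft X P w l eps x)"
proof -
  have "Ft X P w l eps x = (\<Inter>i\<in>{1..2*l}. {z. gt X P w l eps i z x \<le> 0})"
    unfolding Ft_def by auto
  moreover have "closed {z. gt X P w l eps i z x \<le> 0}" for i
    unfolding gt_def by (cases "i \<le> l") (simp_all, (intro closed_Collect_le continuous_intros)+)
  ultimately show ?thesis by auto
qed

lemma beta_minimal:
  assumes "z \<in> Ft X P w l eps x"
  shows "beta X P w l eps x \<in> Ft X P w l eps x" "norm (beta X P w l eps x) \<le> norm z"
proof -
  obtain z0 where z0: "z0 \<in> Ft X P w l eps x" "\<And>y. y \<in> Ft X P w l eps x \<Longrightarrow> norm z0 \<le> norm y"
    using distance_attains_inf[OF closed_Ft, of X P w l eps x 0] assms by auto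
  have "beta X P w l eps x \<in> Ft X P w l eps x \<and>
        (\<forall>y \<in> Ft X P w l eps x. norm (beta X P w l eps x) \<le> norm y)"
    unfolding beta_def by (rule arg_minI[of _ z0]) (use z0 in \<open>auto simp: not_less\<close>)
  then show "beta X P w l eps x \<in> Ft X P w l eps x" "norm (beta X P w l eps x) \<le> norm z"
    using assms by auto
qed

lemma gt_convex_combination:
  "gt X P w l eps i ((1 - d) *\<^sub>R z1 + d *\<^sub>R z2) x
     = (1 - d) * gt X P w l eps i z1 x + d * gt X P w l eps i z2 x"
  unfolding gt_def by (simp add: inner_add_left algebra_simps)

lemma gt_change_point:
  assumes "\<forall>j \<in> {1..l}. norm (w j) = 1" "i \<in> {1..2*l}" "0 \<le> eps"
  shows "gt X P w l eps i z v \<le> gt X P w l eps i z u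
           + (1 + eps / 30) * norm ((v - nn X v) - (u - nn X u))"
proof -
  define D where "D = (v - nn X v) - (u - nn X u)"
  define b where "b = norm (v - nn X v) - norm (u - nn X u)"
  define j where "j = (if i \<le> l then i else i - l)"
  have "\<bar>D \<bullet> w j\<bar> \<le> norm D"
  proof -
    have "j \<in> {1..l}" using assms(2) unfolding j_def by auto
    then show ?thesis using Cauchy_Schwarz_ineq2[of D "w j"] assms(1) by simp
  qed
  moreover have "\<bar>eps / 30 * b\<bar> \<le> eps / 30 * norm D"
    unfolding b_def D_def abs_mult using assms(3) by (simp add: mult_left_mono norm_triangle_ineq3)
  moreover have "gt X P w l eps i z v - gt X P w l eps i z u
      = (if i \<le> l then - (D \<bullet> w j) else D \<bullet> w j) - eps / 30 * b"
    unfolding gt_def D_def b_def j_def by (simp add: inner_diff_left algebra_simps)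
  ultimately show ?thesis
    using distrib_right[of 1 "eps / 30" "norm D"] unfolding D_def[symmetric] abs_le_iff
    by (cases "i \<le> l") auto
qed

lemma gt_change_point_Xtilde:
  fixes X :: "'a::euclidean_space set"
  assumes "u \<in> Xtilde X" "v \<in> Xtilde X"
    and "\<forall>j \<in> {1..l}. norm (w j) = 1" "i \<in> {1..2*l}" "0 \<le> eps" "eps \<le> 1"
  shows "gt X P w l eps i z v \<le> gt X P w l eps i z u + 4 * norm (u - v)"
proof -
  have "(1 + eps / 30) * norm ((v - nn X v) - (u - nn X u)) \<le> (1 + 1 / 30) * (3 * norm (u - v))"
    using residual_lipschitz_Xtilde[OF assms(1,2)] assms(5,6) by (intro mult_mono) auto
  also have "\<dots> \<le> 4 * norm (u - v)" by simp
  finally show ?thesis using gt_change_point[OF assms(3,4,5), of X P z v u] by linarith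
qed

lemma convex_combination_nonpos:
  fixes a b c e \<delta> :: real
  assumes "0 \<le> \<delta>" "\<delta> \<le> 1" "a \<le> e" "b \<le> e - c" "\<delta> * c = e"
  shows "(1 - \<delta>) * a + \<delta> * b \<le> 0"
proof -
  have "(1 - \<delta>) * a \<le> (1 - \<delta>) * e" "\<delta> * b \<le> \<delta> * (e - c)"
    using assms by (auto intro: mult_left_mono)
  then show ?thesis using assms(5) by (simp add: algebra_simps)
qed

theorem lemma4p4:
  fixes X :: "'a::euclidean_space set" and P :: "'a \<Rightarrow> 'b::euclidean_space"
    and w :: "nat \<Rightarrow> 'a" and l :: nat and eps :: real and u v :: 'a and zs :: 'b
  assumes reach_pos: "reach X > 0"
    and eps: "0 < eps" "eps < 1"
    and w_in: "\<forall>i \<in> {1..l}. w i \<in> secants X"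
    and w_net: "\<forall>x \<in> secants X. \<exists>i \<in> {1..l}. dist x (w i) < eps / 40"
    and Pi_lin: "linear P"
    and Pi_dist: "hull_distortion P (eps / 240) (secants X)"
    and u: "u \<in> Xtilde X - closure X"
    and zs_norm: "norm zs \<le> norm (u - nn X u)"
    and zs_g: "\<forall>i \<in> {1..2*l}. gt X P w l eps i zs u \<le> - (eps / 60) * norm (u - nn X u)"
    and v: "v \<in> ball u (min 1 (eps * norm (u - nn X u) / 480)) \<inter> Xtilde X"
  shows "let \<delta> = 240 * norm (u - v) / (eps * norm (u - nn X u));
             zv = (1 - \<delta>) *\<^sub>R beta X P w l eps u + \<delta> *\<^sub>R zs
         in (\<forall>i \<in> {1..2*l}. gt X P w l eps i zv v \<le> 0) \<and> zv \<in> Ft X P w l eps v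
            \<and> norm (beta X P w l eps v) \<le> norm zv"
proof -
  define N where "N = norm (u - nn X u)"
  define \<delta> where "\<delta> = 240 * norm (u - v) / (eps * N)"
  define zv where "zv = (1 - \<delta>) *\<^sub>R beta X P w l eps u + \<delta> *\<^sub>R zs"
  have "0 < N" using u nn_projection_Xtilde[of u X] unfolding N_def by auto
  have "480 * norm (u - v) < eps * N" using v by (simp add: N_def dist_norm)
  then have "240 * norm (u - v) \<le> eps * N" using norm_ge_zero[of "u - v"] by linarith
  moreover have "0 < eps * N" using eps \<open>0 < N\<close> by simp
  ultimately have \<delta>: "0 \<le> \<delta>" "\<delta> \<le> 1" "\<delta> * (eps / 60 * N) = 4 * norm (u - v)"
    unfolding \<delta>_def using eps \<open>0 < N\<close> by (simp_all add: pos_divide_le_eq)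
  have "zs \<in> Ft X P w l eps u"
    unfolding Ft_def
  proof (intro CollectI ballI)
    fix i assume "i \<in> {1..2*l}"
    moreover have "0 \<le> eps / 60 * N" using eps \<open>0 < N\<close> by simp
    ultimately show "gt X P w l eps i zs u \<le> 0" using zs_g unfolding N_def by force
  qed
  then have beta_u: "beta X P w l eps u \<in> Ft X P w l eps u" by (rule beta_minimal)
  have w_unit: "\<forall>j \<in> {1..l}. norm (w j) = 1" using w_in norm_secants by blast
  have zv_feasible: "\<forall>i \<in> {1..2*l}. gt X P w l eps i zv v \<le> 0"
  proof
    fix i assume i: "i \<in> {1..2*l}"
    have shift: "gt X P w l eps i z v \<le> gt X P w l eps i z u + 4 * norm (u - v)" for z
      by (rule gt_change_point_Xtilde[OF _ _ w_unit i]) (use u v eps in auto)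
    have "gt X P w l eps i zv v
        = (1 - \<delta>) * gt X P w l eps i (beta X P w l eps u) v + \<delta> * gt X P w l eps i zs v"
      unfolding zv_def by (rule gt_convex_combination)
    also have "\<dots> \<le> 0"
    proof (rule convex_combination_nonpos[OF \<delta>(1,2) _ _ \<delta>(3)])
      show "gt X P w l eps i (beta X P w l eps u) v \<le> 4 * norm (u - v)"
        using shift[of "beta X P w l eps u"] beta_u i unfolding Ft_def by fastforce
      show "gt X P w l eps i zs v \<le> 4 * norm (u - v) - eps / 60 * N"
        using shift[of zs] zs_g i unfolding N_def by fastforce
    qed
    finally show "gt X P w l eps i zv v \<le> 0" .
  qed
  then have zv_Ft: "zv \<in> Ft X P w l eps v" unfolding Ft_def by blast
  show ?thesis
    unfolding Let_def N_def[symmetric] \<delta>_def[symmetric] zv_def[symmetric]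
    using zv_feasible zv_Ft beta_minimal(2)[OF zv_Ft] by blast
qed

end
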